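(* Let ${\rm d}\ge4$ and consider a static spherically symmetric charged fluid with metric $ds^2=-W(r)^2dt^2+U(r)^2dr^2+r^2d\Omega_{{\rm d}-2}$ for $r\le\mathfrak a$, in which $W^2=a(-\epsilon\sqrt{G_{\rm d}}\phi+b)^2+c$ with constants $a>0,b,c$ and $\epsilon\in\{1,-1\}$, joined at $r=\mathfrak a$ to the exterior Tangherlini (Reissner–Nordström) metric $ds^2=-f(r)dt^2+f(r)^{-1}dr^2+r^2d\Omega_{{\rm d}-2}$, $f(r)=1-\frac{2G_{\rm d}}{{\rm d}-3}\frac{m}{r^{{\rm d}-3}}+\frac{G_{\rm d}}{({\rm d}-3)^2}\frac{q^2}{r^{2({\rm d}-3)}}$, with $q\neq0$, such that $W(\mathfrak a)^2=1/U(\mathfrak a)^2=f(\mathfrak a)$, $W'(\mathfrak a)=f'(\mathfrak a)/(2W(\mathfrak a))$, and the interior charge function $Q(r)=r^{{\rm d}-2}\phi'(r)/(W U)$ satisfies $Q(\mathfrak a)=q$. Then $ac=a\left[1-\frac{G_{\rm d}m^2}{q^2}\right]+(a-1)\left(\frac{m}{q}-\frac{q}{({\rm d}-3)\mathfrak a^{{\rm d}-3}}\right)^2G_{\rm d}$.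
   Context: $d\Omega_{{\rm d}-2}$ is the round metric on the unit sphere $\mathbf S^{{\rm d}-2}$; $G_{\rm d}>0$ is the ${\rm d}$-dimensional gravitational constant; $\phi(r)$ is the electrostatic potential ($A_\mu=-\phi\delta^0_\mu$); primes denote $d/dr$. The function $Q(r)$ is the charge enclosed within radius $r$ obtained by integrating the Maxwell equation, and $m,q$ are the mass and charge parameters of the exterior solution. *)

theory Defs
  imports "HOL-Analysis.Analysis"
begin

definition tangherlini_f :: "real \<Rightarrow> nat \<Rightarrow> real \<Rightarrow> real \<Rightarrow> real \<Rightarrow> real" where
  "tangherlini_f G d m q r =
     1 - (2 * G / (real d - 3)) * (m / r ^ (d - 3))
       + (G / (real d - 3)^2) * (q^2 / r ^ (2 * (d - 3)))"

definition charge_Q :: "nat \<Rightarrow> (real \<Rightarrow> real) \<Rightarrow> (real \<Rightarrow> real) \<Rightarrow> (real \<Rightarrow> real) \<Rightarrow> real \<Rightarrow> real" where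
  "charge_Q d dphi W U r = r ^ (d - 2) * dphi r / (W r * U r)"

end

theory Submission
  imports Defs
begin

(*
  Write n = d - 3 and let
      y(r) = m/q - q/(n r^n)
  be the "charge gap" of the exterior solution.  Completing the square gives
      f(r) = 1 - G m^2/q^2 + G y(r)^2,          f'(r) = 2 G q y(r) / r^(d-2).
  In the interior, differentiating W^2 = a psi^2 + c with psi = -eps sqrt G phi + b gives
      W W' = -a eps sqrt G psi phi'.
  At the boundary W U = 1, so the charge condition reads phi'(R) = q / R^(d-2), and the
  derivative matching 2 W W' = f' turns into  G y(R) = -a eps sqrt G psi(R).
  Squaring (eps^2 = 1) gives a^2 psi^2 = G y^2, and then  a c = a f(R) - a^2 psi^2
  is exactly the claimed identity.
*)

definition charge_gap :: "nat \<Rightarrow> real \<Rightarrow> real \<Rightarrow> real \<Rightarrow> real" where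
  "charge_gap d m q r = m / q - q / ((real d - 3) * r ^ (d - 3))"

lemma tangherlini_f_completed_square:
  assumes "d \<ge> 4" and "q \<noteq> 0" and "r > 0"
  shows "tangherlini_f G d m q r = 1 - G * m^2 / q^2 + G * (charge_gap d m q r)^2"
proof -
  define n where "n = d - 3"
  define x where "x = r ^ n"
  have n: "real d - 3 = real n" "real n \<noteq> 0" using assms(1) by (auto simp: n_def)
  have x: "x \<noteq> 0" using assms(3) by (simp add: x_def)
  have sq: "r ^ (2 * n) = x^2" by (simp add: x_def power_mult mult.commute[of 2 n])
  show ?thesis
    unfolding tangherlini_f_def charge_gap_def n_def[symmetric] n(1) sq x_def[symmetric]
    using assms(2) n(2) x by (simp add: field_simps power2_eq_square)
qed

lemma tangherlini_f_derivative:
  assumes "d \<ge> 4" and "q \<noteq> 0" and "r > 0"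
  shows "(tangherlini_f G d m q has_real_derivative
           2 * G * q * charge_gap d m q r / r ^ (d - 2)) (at r)"
proof -
  define n where "n = d - 3"
  define x where "x = r ^ n"
  obtain j where j: "n = Suc j" using assms(1) by (cases "d - 3") (auto simp: n_def)
  have n: "real d - 3 = real n" "real n \<noteq> 0" "d - 2 = Suc n"
    using assms(1) by (auto simp: n_def)
  have x: "x \<noteq> 0" using assms(3) by (simp add: x_def)
  have x2: "r ^ (2 * n) = x * x" by (simp add: x_def power_add[symmetric] mult_2)
  have pow: "r ^ j = x / r" "r ^ (2 * n - 1) = x * x / r" "r ^ (d - 2) = r * x"
    using assms(3) j x2 by (auto simp: x_def n(3) field_simps)
  have f: "tangherlini_f G d m q =
      (\<lambda>r. 1 - (2 * G / real n) * (m / r ^ n) + (G / (real n)^2) * (q^2 / r ^ (2 * n)))"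
    by (auto simp: tangherlini_f_def n(1) n_def)
  have "(tangherlini_f G d m q has_real_derivative
          - (2 * G / real n) * (- (m * (real n * r ^ j)) / (r ^ n * r ^ n))
          + (G / (real n)^2) * (- (q^2 * (real (2 * n) * r ^ (2 * n - 1)))
              / (r ^ (2 * n) * r ^ (2 * n)))) (at r)"
    unfolding f using assms(3) j by (auto intro!: derivative_eq_intros simp del: power_Suc)
  moreover have "- (2 * G / real n) * (- (m * (real n * r ^ j)) / (r ^ n * r ^ n))
          + (G / (real n)^2) * (- (q^2 * (real (2 * n) * r ^ (2 * n - 1)))
              / (r ^ (2 * n) * r ^ (2 * n)))
        = 2 * G * q * charge_gap d m q r / r ^ (d - 2)"
    unfolding charge_gap_def n_def[symmetric] n(1) pow x2 x_def[symmetric]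
    using assms(2,3) n(2) x by (simp add: field_simps power2_eq_square)
  ultimately show ?thesis by simp
qed

lemma interior_W_derivative:
  fixes W \<phi> dW d\<phi> :: "real \<Rightarrow> real"
  assumes r: "r \<in> {0<..R}"
    and W': "(W has_real_derivative dW r) (at r within {0<..R})"
    and \<phi>': "(\<phi> has_real_derivative d\<phi> r) (at r within {0<..R})"
    and W2: "\<forall>s\<in>{0<..R}. (W s)^2 = a * (- \<epsilon> * sqrt G * \<phi> s + b)^2 + c"
  shows "W r * dW r = - a * \<epsilon> * sqrt G * (- \<epsilon> * sqrt G * \<phi> r + b) * d\<phi> r"
proof -
  have nontrivial: "at r within {0<..R} \<noteq> bot"
    using r by (auto simp: trivial_limit_within islimpt_Ioc)
  have lhs: "((\<lambda>s. (W s)^2) has_real_derivative 2 * W r * dW r) (at r within {0<..R})"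
    using W' by (auto intro!: derivative_eq_intros)
  hence lhs': "((\<lambda>s. a * (- \<epsilon> * sqrt G * \<phi> s + b)^2 + c) has_real_derivative 2 * W r * dW r)
      (at r within {0<..R})"
    by (rule has_field_derivative_transform_within[OF _ zero_less_one r]) (use W2 in auto)
  have rhs: "((\<lambda>s. a * (- \<epsilon> * sqrt G * \<phi> s + b)^2 + c) has_real_derivative
      a * (2 * (- \<epsilon> * sqrt G * \<phi> r + b) * (- \<epsilon> * sqrt G * d\<phi> r))) (at r within {0<..R})"
    using \<phi>' by (auto intro!: derivative_eq_intros)
  have "2 * W r * dW r = a * (2 * (- \<epsilon> * sqrt G * \<phi> r + b) * (- \<epsilon> * sqrt G * d\<phi> r))"
    by (rule has_field_derivative_unique[OF lhs' rhs nontrivial])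
  thus ?thesis by (simp add: algebra_simps)
qed

lemma boundary_W_times_U:
  assumes "W > 0" and "U > 0" and "W^2 = F" and "1 / U^2 = F"
  shows "W * U = (1::real)"
proof -
  have "(W * U)^2 = 1" using assms by (simp add: power_mult_distrib field_simps)
  moreover have "W * U > 0" using assms(1,2) by simp
  ultimately show ?thesis using power2_eq_1_iff[of "W * U"] by auto
qed

lemma boundary_potential_derivative:
  assumes "charge_Q d d\<phi> W U R = q" and "W R * U R = 1" and "R > 0"
  shows "d\<phi> R = q / R ^ (d - 2)"
  using assms by (simp add: charge_Q_def field_simps)

text \<open>Matching the interior relation for W W' with the exterior derivative f'/2 at the
  boundary identifies the gap: G y(R) = -a eps sqrt G psi(R).\<close>
lemma boundary_gap_relation:
  fixes R q G y WdW k :: real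
  assumes "R > 0" and "q \<noteq> 0"
    and "2 * WdW = 2 * G * q * y / R ^ n"
    and "WdW = - k * (q / R ^ n)"
  shows "G * y = - k"
proof -
  have "2 * ((G * y) * (q / R ^ n)) = 2 * ((- k) * (q / R ^ n))"
    using assms(3,4) by (simp add: algebra_simps)
  hence "(G * y) * (q / R ^ n) = (- k) * (q / R ^ n)" by simp
  moreover have "q / R ^ n \<noteq> 0" using assms(1,2) by simp
  ultimately show ?thesis by (metis mult_right_cancel)
qed

theorem mainTheorem15:
  fixes d :: nat and G a b c \<epsilon> m q R :: real
    and W U \<phi> dW d\<phi> :: "real \<Rightarrow> real"
  assumes hd: "d \<ge> 4"
    and hG: "G > 0"
    and ha: "a > 0"
    and heps: "\<epsilon> = 1 \<or> \<epsilon> = -1"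
    and hq: "q \<noteq> 0"
    and hR: "R > 0"
    and hWpos: "\<forall>r\<in>{0<..R}. W r > 0"
    and hUpos: "\<forall>r\<in>{0<..R}. U r > 0"
    and hWder: "\<forall>r\<in>{0<..R}. (W has_real_derivative dW r) (at r within {0<..R})"
    and h\<phi>der: "\<forall>r\<in>{0<..R}. (\<phi> has_real_derivative d\<phi> r) (at r within {0<..R})"
    and hW2: "\<forall>r\<in>{0<..R}. (W r)^2 = a * (- \<epsilon> * sqrt G * \<phi> r + b)^2 + c"
    and hmatch1: "(W R)^2 = tangherlini_f G d m q R"
    and hmatch2: "1 / (U R)^2 = tangherlini_f G d m q R"
    and hmatch3: "dW R = deriv (tangherlini_f G d m q) R / (2 * W R)"
    and hcharge: "charge_Q d d\<phi> W U R = q"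
  shows "a * c = a * (1 - G * m^2 / q^2)
           + (a - 1) * (m / q - q / ((real d - 3) * R ^ (d - 3)))^2 * G"
proof -
  define \<psi> where "\<psi> = - \<epsilon> * sqrt G * \<phi> R + b"
  define y where "y = charge_gap d m q R"
  have R: "R \<in> {0<..R}" using hR by simp
  have WU: "W R * U R = 1"
    using boundary_W_times_U hWpos hUpos hmatch1 hmatch2 R by blast
  have exterior: "2 * (W R * dW R) = 2 * G * q * y / R ^ (d - 2)"
  proof -
    have "W R > 0" using hWpos R by blast
    thus ?thesis using hmatch3 DERIV_imp_deriv[OF tangherlini_f_derivative[OF hd hq hR]]
      by (simp add: y_def)
  qed
  have interior: "W R * dW R = - (a * \<epsilon> * sqrt G * \<psi>) * (q / R ^ (d - 2))"
    using interior_W_derivative[where dW = dW and d\<phi> = d\<phi>,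
        OF R bspec[OF hWder R] bspec[OF h\<phi>der R] hW2]
      boundary_potential_derivative[OF hcharge WU hR] by (simp add: \<psi>_def)
  have "G * y = - (a * \<epsilon> * sqrt G * \<psi>)"
    by (rule boundary_gap_relation[OF hR hq exterior interior])
  hence "(G * y)^2 = a^2 * G * \<psi>^2"
    using heps hG by (auto simp: power_mult_distrib)
  hence a\<psi>: "a^2 * \<psi>^2 = G * y^2" using hG by (simp add: power2_eq_square algebra_simps)
  have "c = tangherlini_f G d m q R - a * \<psi>^2" using hW2 hmatch1 R by (simp add: \<psi>_def)
  also have "\<dots> = 1 - G * m^2 / q^2 + G * y^2 - a * \<psi>^2"
    using tangherlini_f_completed_square[OF hd hq hR] by (simp add: y_def)
  finally have "a * c = a * (1 - G * m^2 / q^2 + G * y^2 - a * \<psi>^2)" by (simp only:)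
  also have "\<dots> = a * (1 - G * m^2 / q^2 + G * y^2) - a^2 * \<psi>^2"
    by (simp add: algebra_simps power2_eq_square)
  also have "\<dots> = a * (1 - G * m^2 / q^2 + G * y^2) - G * y^2" by (simp only: a\<psi>)
  finally have "a * c = a * (1 - G * m^2 / q^2) + (a - 1) * y^2 * G"
    by (simp add: algebra_simps)
  thus ?thesis by (simp add: y_def charge_gap_def algebra_simps)
qed

end
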